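(* Let $R:\mathbb{R}_{\geq0}\to SO(3)$, $p:\mathbb{R}_{\geq0}\to\mathbb{R}^3$ describe a rigid-body motion with $\dot R=R\omega^\times$, where $\omega$ is continuous and bounded, and let $g=[g_1,g_2,g_3]^\top$ be the (constant, nonzero) gravity vector. Let $p_1,\dots,p_N\in\mathbb{R}^3$ ($N\geq3$), $p_i=[p_{i1},p_{i2},p_{i3}]^\top$, be constant landmark positions, and let a stereo camera pair have fixed extrinsics $(R_{c1},p_{c1}),(R_{c2},p_{c2})\in SO(3)\times\mathbb{R}^3$, with bearing measurements $y_i^s=\frac{R_{cs}^\top(R^\top(p_i-p)-p_{cs})}{\|R^\top(p_i-p)-p_{cs}\|}$, $s=1,2$. Set $\Pi_i(t)=\pi(R_{c1}y_i^1(t))+\pi(R_{c2}y_i^2(t))$ and assume each $\Pi_i(t)$ is continuous, bounded and uniformly positive definite. Define $A(t)$ by $$A(t)=\begin{bmatrix} -\omega^\times & 0_3 & 0_3 & 0_3 & I_3\\ 0_3 & -\omega^\times & 0_3 & 0_3 & 0_3\\ 0_3&0_3&-\omega^\times&0_3&0_3\\ 0_3&0_3&0_3&-\omega^\times&0_3\\ 0_3& g_1I_3& g_2 I_3& g_3 I_3& -\omega^\times\end{bmatrix}$$ and $C(t)\in\mathbb{R}^{3N\times15}$ whose $i$-th block row is $[\,\Pi_i,\ -p_{i1}\Pi_i,\ -p_{i2}\Pi_i,\ -p_{i3}\Pi_i,\ 0_3\,]$. Suppose that among the $N$ landmarks there are three non-aligned landmarks whose plane is not parallel to the gravity vector $g$.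 Then the pair $(A(t),C(t))$ is uniformly observable.
   Context: $x^\times$ denotes the skew-symmetric matrix with $x^\times y=x\times y$. For a unit vector $x\in\mathbb{S}^2$, $\pi(x)=I_3-xx^\top$. A pair $(A(t),C(t))$ of continuous bounded matrix functions is uniformly observable if there exist $\delta,\mu>0$ such that $\frac1\delta\int_t^{t+\delta}\Phi(\tau,t)^\top C(\tau)^\top C(\tau)\Phi(\tau,t)\,d\tau\geq\mu I$ for all $t\geq0$, where $\Phi$ is the state transition matrix of $A(t)$. *)

theory Defs
  imports "HOL-Analysis.Analysis"
begin

text \<open>Skew-symmetric matrix: skew x *v y = x \<times> y.\<close>
definition skew :: "real^3 \<Rightarrow> real^3^3" where
  "skew x = vector [vector [0, - x$3, x$2], vector [x$3, 0, - x$1], vector [- x$2, x$1, 0]]"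

definition proj :: "real^3 \<Rightarrow> real^3^3" where
  "proj x = mat 1 - (\<chi> i j. x$i * x$j)"

definition SO3 :: "(real^3^3) set" where
  "SO3 = {Q. orthogonal_matrix Q \<and> det Q = 1}"

definition bearing :: "(real \<Rightarrow> real^3^3) \<Rightarrow> (real \<Rightarrow> real^3) \<Rightarrow> real^3^3 \<Rightarrow> real^3 \<Rightarrow> real^3 \<Rightarrow> real \<Rightarrow> real^3" where
  "bearing R p Rc pc l t =
     (transpose Rc *v (transpose (R t) *v (l - p t) - pc)) /\<^sub>R norm (transpose (R t) *v (l - p t) - pc)"

definition PiM :: "(real \<Rightarrow> real^3^3) \<Rightarrow> (real \<Rightarrow> real^3) \<Rightarrow> real^3^3 \<Rightarrow> real^3 \<Rightarrow> real^3^3 \<Rightarrow> real^3 \<Rightarrow> real^3 \<Rightarrow> real \<Rightarrow> real^3^3" where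
  "PiM R p Rc1 pc1 Rc2 pc2 l t =
     proj (Rc1 *v bearing R p Rc1 pc1 l t) + proj (Rc2 *v bearing R p Rc2 pc2 l t)"

text \<open>15-dimensional state indexed by (block, component), blocks 1..5 (literals of type 5).\<close>
definition Ablk :: "real^3 \<Rightarrow> real^3 \<Rightarrow> 5 \<Rightarrow> 5 \<Rightarrow> real^3^3" where
  "Ablk w g b b' =
     (if b = b' then - skew w
      else if b = 1 \<and> b' = 5 then mat 1
      else if b = 5 \<and> b' = 2 then g$1 *\<^sub>R mat 1
      else if b = 5 \<and> b' = 3 then g$2 *\<^sub>R mat 1
      else if b = 5 \<and> b' = 4 then g$3 *\<^sub>R mat 1
      else 0)"

definition Amat :: "(real \<Rightarrow> real^3) \<Rightarrow> real^3 \<Rightarrow> real \<Rightarrow> real^(5 \<times> 3)^(5 \<times> 3)" where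
  "Amat \<omega> g t = (\<chi> u v. Ablk (\<omega> t) g (fst u) (fst v) $ snd u $ snd v)"

definition Cblk :: "real^3^3 \<Rightarrow> real^3 \<Rightarrow> 5 \<Rightarrow> real^3^3" where
  "Cblk P l b' =
     (if b' = 1 then P
      else if b' = 2 then (- l$1) *\<^sub>R P
      else if b' = 3 then (- l$2) *\<^sub>R P
      else if b' = 4 then (- l$3) *\<^sub>R P
      else 0)"

definition Cmat :: "('n::finite \<Rightarrow> real \<Rightarrow> real^3^3) \<Rightarrow> ('n \<Rightarrow> real^3) \<Rightarrow> real \<Rightarrow> real^(5 \<times> 3)^('n \<times> 3)" where
  "Cmat P pl t = (\<chi> u v. Cblk (P (fst u) t) (pl (fst u)) (fst v) $ snd u $ snd v)"

definition is_transition :: "(real \<Rightarrow> real^'m::finite^'m) \<Rightarrow> (real \<Rightarrow> real \<Rightarrow> real^'m^'m) \<Rightarrow> bool" where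
  "is_transition A \<Phi> \<longleftrightarrow> (\<forall>t\<ge>0. \<Phi> t t = mat 1 \<and>
      (\<forall>\<tau>\<ge>t. ((\<lambda>s. \<Phi> s t) has_vector_derivative (A \<tau> ** \<Phi> \<tau> t)) (at \<tau> within {t..})))"

definition uniformly_observable :: "(real \<Rightarrow> real^'m::finite^'m) \<Rightarrow> (real \<Rightarrow> real^'m^'k::finite) \<Rightarrow> bool" where
  "uniformly_observable A C \<longleftrightarrow> (\<exists>\<Phi>. is_transition A \<Phi> \<and>
     (\<exists>\<delta>>0. \<exists>\<mu>>0. \<forall>t\<ge>0. \<forall>x.
        x \<bullet> (((1/\<delta>) *\<^sub>R integral {t..t+\<delta>}
               (\<lambda>\<tau>. transpose (C \<tau> ** \<Phi> \<tau> t) ** (C \<tau> ** \<Phi> \<tau> t))) *v x) \<ge> \<mu> * (x \<bullet> x)))"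

end

theory Submission
  imports Defs
begin

(* The drift matrix splits as A(t) = diag(-omega(t)^x) + N with a constant N that is nilpotent
   of order 3 and commutes with block-diagonal matrices, so the transition matrix is
   exp((tau - t) N) diag(R(tau)^T R(t)), a polynomial of degree 2 in tau - t.  Rotations are
   isometries and every Pi_i is uniformly coercive, hence the output energy on [t, t + 1]
   dominates, up to a constant factor, the energy of the rotation-free output s |-> K exp(s N) y
   on [0, 1], where y = diag(R(t)) x and K has the block rows [I, -p_i1 I, -p_i2 I, -p_i3 I, 0].
   The Gramian of this output is positive definite: if K exp(s N) y vanishes at s = 0, 1/2, 1,
   then K y, the velocity block y_5 and the gravity combination g_1 y_2 + g_2 y_3 + g_3 y_4
   vanish; so for every coordinate m the vector (y_2 m, y_3 m, y_4 m) is orthogonal to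
   p_j - p_i, p_k - p_i and g, which span R^3 by the hypothesis on the landmarks. *)

section \<open>Matrix-valued functions and their Gramians\<close>

lemma norm_orthogonal_matrix_vector_mult:
  "orthogonal_matrix Q \<Longrightarrow> norm (Q *v v) = norm (v::real^'n::finite)"
  by (metis orthogonal_transformation orthogonal_transformation_matrix
      matrix_of_matrix_vector_mul matrix_vector_mul_linear)

lemma bounded_linear_transpose:
  "bounded_linear (transpose :: real^'n::finite^'m::finite \<Rightarrow> real^'m^'n)"
  by (rule linear_conv_bounded_linear[THEN iffD1], rule linearI)
     (simp_all add: vec_eq_iff transpose_def)

lemma scaleR_matrix_vector_mult [simp]: "(c *\<^sub>R A) *v x = c *\<^sub>R (A *v (x::real^'n::finite))"
  by (metis matrix_scaleR_vector_ac matrix_vector_mult_scaleR)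

lemma matrix_vector_mult_uminus [simp]:
  "(- A) *v x = - (A *v x)" "A *v (- x) = - (A *v (x::real^'n::finite))"
  by (simp_all add: vec_eq_iff matrix_vector_mult_def sum_negf)

lemmas matrix_vector_mult_distribs = matrix_vector_right_distrib matrix_vector_mult_diff_distrib
  matrix_vector_mult_add_rdistrib matrix_vector_mult_scaleR

lemma bounded_linear_matrix_vector_mult_left:
  "bounded_linear (\<lambda>M::real^'n::finite^'m::finite. M *v y)"
  by (rule linear_conv_bounded_linear[THEN iffD1], rule linearI)
     (simp_all add: matrix_vector_mult_distribs)

lemma bounded_bilinear_matrix_mult:
  "bounded_bilinear ((**) :: real^'n::finite^'m::finite \<Rightarrow> real^'k::finite^'n \<Rightarrow> real^'k^'m)"
  unfolding bilinear_conv_bounded_bilinear[symmetric] bilinear_def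
  by (auto intro!: linearI simp: vec_eq_iff matrix_matrix_mult_def sum.distrib sum_distrib_left
      algebra_simps)

lemma inner_matrix_vector_mult: "(A *v x) \<bullet> y = x \<bullet> (transpose A *v (y::real^_))"
  by (metis dot_lmul_matrix inner_commute transpose_matrix_vector)

lemma quadratic_form_integral_gramian:
  fixes F :: "real \<Rightarrow> real^'n::finite^'m::finite"
  assumes "continuous_on {a..b} F"
  shows "x \<bullet> (integral {a..b} (\<lambda>\<tau>. transpose (F \<tau>) ** F \<tau>) *v x)
       = integral {a..b} (\<lambda>\<tau>. norm (F \<tau> *v x) ^ 2)"
proof -
  have cont: "continuous_on {a..b} (\<lambda>\<tau>. transpose (F \<tau>) ** F \<tau>)"
    by (intro bounded_bilinear.continuous_on[OF bounded_bilinear_matrix_mult]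
        bounded_linear.continuous_on[OF bounded_linear_transpose] assms)
  have lin: "bounded_linear (\<lambda>M::real^'n^'n. x \<bullet> (M *v x))"
    by (rule linear_conv_bounded_linear[THEN iffD1], rule linearI)
       (simp_all add: matrix_vector_mult_distribs inner_add_right)
  have "x \<bullet> (integral {a..b} (\<lambda>\<tau>. transpose (F \<tau>) ** F \<tau>) *v x)
      = integral {a..b} (\<lambda>\<tau>. x \<bullet> ((transpose (F \<tau>) ** F \<tau>) *v x))"
    using integral_linear[OF integrable_continuous_interval[OF cont] lin] by (simp add: o_def)
  also have "\<dots> = integral {a..b} (\<lambda>\<tau>. norm (F \<tau> *v x) ^ 2)"
    by (simp add: power2_norm_eq_inner inner_matrix_vector_mult[of "F _" x]
        matrix_vector_mul_assoc inner_commute)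
  finally show ?thesis .
qed

lemma norm_ge_if_coercive:
  assumes "\<forall>x. e * (x \<bullet> x) \<le> x \<bullet> (P *v x)"
  shows "e * norm v \<le> norm (P *v (v::real^'n::finite))"
proof (cases "v = 0")
  case False
  have "e * norm v * norm v \<le> v \<bullet> (P *v v)"
    using assms by (simp add: dot_square_norm power2_eq_square mult.assoc)
  also have "\<dots> \<le> norm v * norm (P *v v)"
    by (rule norm_cauchy_schwarz)
  finally show ?thesis
    using False by (simp add: mult.commute)
qed simp

lemma gramian_coercive:
  fixes L :: "real \<Rightarrow> real^'n::finite^'m::finite"
  assumes "a < b" and cont: "continuous_on {a..b} L"
    and kernel: "\<And>y. y \<noteq> 0 \<Longrightarrow> \<exists>s\<in>{a..b}. L s *v y \<noteq> 0"
  shows "\<exists>m>0. \<forall>y. m * (y \<bullet> y) \<le> integral {a..b} (\<lambda>s. norm (L s *v y) ^ 2)"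
proof -
  define q where "q y = integral {a..b} (\<lambda>s. norm (L s *v y) ^ 2)" for y
  define G where "G = integral {a..b} (\<lambda>s. transpose (L s) ** L s)"
  have q_G: "q y = y \<bullet> (G *v y)" for y
    unfolding q_def G_def by (rule quadratic_form_integral_gramian[symmetric, OF cont])
  have q_cont: "continuous_on (sphere 0 1) q"
    unfolding q_G by (intro continuous_intros)
  obtain y0 where y0: "y0 \<in> sphere 0 1" and min: "\<And>y. y \<in> sphere 0 1 \<Longrightarrow> q y0 \<le> q y"
    using continuous_attains_inf[OF compact_sphere _ q_cont] by auto
  have integrand_cont: "continuous_on {a..b} (\<lambda>s. norm (L s *v y) ^ 2)" for y
    by (intro continuous_intros bounded_linear.continuous_on[OF bounded_linear_matrix_vector_mult_left] cont)
  have "0 < q y0"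
  proof (rule ccontr)
    assume "\<not> 0 < q y0"
    moreover have "0 \<le> q y0"
      unfolding q_def by (rule integral_nonneg[OF integrable_continuous_interval[OF integrand_cont]]) simp
    ultimately have "((\<lambda>s. norm (L s *v y0) ^ 2) has_integral 0) {a..b}"
      using integrable_integral[OF integrable_continuous_interval[OF integrand_cont[of y0]]]
      unfolding q_def by simp
    then have "L s *v y0 = 0" if "s \<in> {a..b}" for s
      using has_integral_0_cbox_imp_0[of a b "\<lambda>s. norm (L s *v y0) ^ 2" s] integrand_cont that
        \<open>a < b\<close> by simp
    moreover have "y0 \<noteq> 0" using y0 by auto
    ultimately show False using kernel by blast
  qed
  moreover have "q y0 * (y \<bullet> y) \<le> q y" for y
  proof (cases "y = 0")
    case False
    have "q y = norm y ^ 2 * q (y /\<^sub>R norm y)"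
      using False by (simp add: q_G power2_eq_square matrix_vector_mult_distribs field_simps)
    moreover have "q y0 \<le> q (y /\<^sub>R norm y)"
      using False by (intro min) simp
    ultimately show ?thesis
      by (simp add: power2_norm_eq_inner[symmetric] mult.commute[of "q y0"] mult_left_mono)
  qed (simp add: q_def)
  ultimately show ?thesis
    unfolding q_def by blast
qed

section \<open>Vectors and matrices of 3 x 3 blocks\<close>

definition block_matrix :: "('a::finite \<Rightarrow> 'b::finite \<Rightarrow> real^3^3) \<Rightarrow> real^('b\<times>3)^('a\<times>3)" where
  "block_matrix F = (\<chi> u v. F (fst u) (fst v) $ snd u $ snd v)"

definition block :: "real^('a::finite\<times>3) \<Rightarrow> 'a \<Rightarrow> real^3" where
  "block z a = (\<chi> m. z $ (a, m))"

lemma sum_UNIV_prod: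
  "(\<Sum>v\<in>(UNIV::('a::finite\<times>'b::finite) set). f v) = (\<Sum>a\<in>UNIV. \<Sum>b\<in>UNIV. f (a, b))"
  by (simp add: sum.cartesian_product UNIV_Times_UNIV[symmetric] del: UNIV_Times_UNIV)

lemma block_matrix_vector_mult: "block (block_matrix F *v z) a = (\<Sum>b\<in>UNIV. F a b *v block z b)"
  by (simp add: vec_eq_iff block_def block_matrix_def matrix_vector_mult_def sum_UNIV_prod)

lemma blocks_eqI: "(\<And>a. block z a = block w a) \<Longrightarrow> z = w"
  by (simp add: vec_eq_iff block_def)

lemma block_simps [simp]:
  "block (z + w) a = block z a + block w a" "block (z - w) a = block z a - block w a"
  "block (c *\<^sub>R z) a = c *\<^sub>R block z a" "block (- z) a = - block z a" "block 0 a = 0"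
  by (simp_all add: vec_eq_iff block_def)

lemma inner_blocks: "z \<bullet> w = (\<Sum>a\<in>UNIV. block z a \<bullet> block w a)"
  by (simp add: inner_vec_def block_def sum_UNIV_prod)

lemma norm_power2_blocks: "norm z ^ 2 = (\<Sum>a\<in>UNIV. norm (block z a) ^ 2)"
  by (simp add: power2_norm_eq_inner inner_blocks)

definition block_diag :: "real^3^3 \<Rightarrow> real^('a::finite\<times>3)^('a\<times>3)" where
  "block_diag M = block_matrix (\<lambda>a b. if a = b then M else 0)"

lemma block_block_diag [simp]: "block (block_diag M *v z) a = M *v block z a"
  unfolding block_diag_def block_matrix_vector_mult
  by (simp add: if_distrib[of "\<lambda>X. X *v _"] cong: if_cong)

lemma block_diag_mult: "block_diag A ** block_diag B = block_diag (A ** B)"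
  unfolding matrix_eq matrix_vector_mul_assoc[symmetric]
  by (intro allI blocks_eqI) (simp flip: matrix_vector_mul_assoc)

lemma block_diag_one: "block_diag (mat 1) = mat 1"
  unfolding matrix_eq by (intro allI blocks_eqI) simp

lemma bounded_linear_block_diag:
  "bounded_linear (block_diag :: real^3^3 \<Rightarrow> real^('a::finite\<times>3)^('a\<times>3))"
  by (rule linear_conv_bounded_linear[THEN iffD1], rule linearI)
     (simp_all add: vec_eq_iff block_diag_def block_matrix_def)

lemma norm_block_diag_orthogonal:
  assumes "orthogonal_matrix Q"
  shows "norm (block_diag Q *v z) = norm z"
proof -
  have "norm (block_diag Q *v z) ^ 2 = norm z ^ 2"
    by (simp add: norm_power2_blocks norm_orthogonal_matrix_vector_mult[OF assms])
  then show ?thesis by simp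
qed

lemma UNIV_5: "(UNIV::5 set) = {1, 2, 3, 4, 5}"
  by (rule sym, rule card_subset_eq) auto

lemma sum_UNIV_5: "(\<Sum>b\<in>(UNIV::5 set). f b) = f 1 + f 2 + f 3 + f 4 + f 5"
  unfolding UNIV_5 by (simp add: algebra_simps)

section \<open>The transition matrix\<close>

definition nil_part :: "real^3 \<Rightarrow> real^(5\<times>3)^(5\<times>3)" where
  "nil_part g = block_matrix (\<lambda>b b'.
     if b = 1 \<and> b' = 5 then mat 1
     else if b = 5 \<and> b' = 2 then g$1 *\<^sub>R mat 1
     else if b = 5 \<and> b' = 3 then g$2 *\<^sub>R mat 1
     else if b = 5 \<and> b' = 4 then g$3 *\<^sub>R mat 1
     else 0)"

definition gravity_term :: "real^3 \<Rightarrow> real^(5\<times>3) \<Rightarrow> real^3" where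
  "gravity_term g z = g$1 *\<^sub>R block z 2 + g$2 *\<^sub>R block z 3 + g$3 *\<^sub>R block z 4"

lemma block_nil_part:
  "block (nil_part g *v z) b = (if b = 1 then block z 5 else if b = 5 then gravity_term g z else 0)"
  unfolding nil_part_def block_matrix_vector_mult sum_UNIV_5 gravity_term_def by simp

lemma block_nil_part_simps [simp]:
  "block (nil_part g *v z) 1 = block z 5" "block (nil_part g *v z) 5 = gravity_term g z"
  "block (nil_part g *v z) 2 = 0" "block (nil_part g *v z) 3 = 0" "block (nil_part g *v z) 4 = 0"
  by (simp_all add: block_nil_part)

lemma gravity_term_simps [simp]:
  "gravity_term g (nil_part g *v z) = 0" "gravity_term g (block_diag M *v z) = M *v gravity_term g z"
  "gravity_term g (z + w) = gravity_term g z + gravity_term g w"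
  "gravity_term g (c *\<^sub>R z) = c *\<^sub>R gravity_term g z"
  by (simp_all add: gravity_term_def algebra_simps)

lemma Amat_eq: "Amat \<omega> g t = block_diag (- skew (\<omega> t)) + nil_part g"
  by (auto simp: vec_eq_iff Amat_def Ablk_def block_diag_def nil_part_def block_matrix_def)

(* nil_part g is nilpotent of order 3, so this is the matrix exponential exp (s N). *)

definition exp_nil_part :: "real^3 \<Rightarrow> real \<Rightarrow> real^(5\<times>3)^(5\<times>3)" where
  "exp_nil_part g s = mat 1 + s *\<^sub>R nil_part g + (s^2 / 2) *\<^sub>R (nil_part g ** nil_part g)"

lemma exp_nil_part_0: "exp_nil_part g 0 = mat 1"
  by (simp add: exp_nil_part_def)

lemma exp_nil_part_vector_mult:
  "exp_nil_part g s *v z = z + s *\<^sub>R (nil_part g *v z) + (s^2 / 2) *\<^sub>R (nil_part g *v (nil_part g *v z))"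
  by (simp add: exp_nil_part_def matrix_vector_mul_assoc matrix_vector_mult_distribs)

lemma exp_nil_part_block_diag_commute:
  "exp_nil_part g s ** block_diag M = block_diag M ** exp_nil_part g s"
  unfolding matrix_eq matrix_vector_mul_assoc[symmetric]
  by (intro allI blocks_eqI)
    (simp add: exp_nil_part_vector_mult block_nil_part matrix_vector_mult_distribs)

lemma exp_nil_part_has_vector_derivative:
  "((\<lambda>s. exp_nil_part g (s - t)) has_vector_derivative
     (nil_part g + (\<tau> - t) *\<^sub>R (nil_part g ** nil_part g))) (at \<tau> within S)"
proof -
  have "((\<lambda>s. exp_nil_part g (s - t)) has_vector_derivative
     (0 + ((\<tau> - t) *\<^sub>R 0 + 1 *\<^sub>R nil_part g)
        + (((\<tau> - t)^2 / 2) *\<^sub>R 0 + (\<tau> - t) *\<^sub>R (nil_part g ** nil_part g)))) (at \<tau> within S)"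
    unfolding exp_nil_part_def
    by (intro derivative_eq_intros) (auto simp: power2_eq_square)
  then show ?thesis by simp
qed

lemma transpose_skew: "transpose (skew w) = - skew w"
  by (simp add: vec_eq_iff transpose_def skew_def forall_3)

lemma transition_derivative_eq:
  "(exp_nil_part g s ** block_diag (transpose (Q ** skew w))
      + (nil_part g + s *\<^sub>R (nil_part g ** nil_part g)) ** block_diag (transpose Q)) ** block_diag Q0
   = (block_diag (- skew w) + nil_part g) ** (exp_nil_part g s ** block_diag (transpose Q) ** block_diag Q0)"
  unfolding matrix_eq
  by (intro allI blocks_eqI)
    (simp add: exp_nil_part_vector_mult block_nil_part matrix_transpose_mul transpose_skew
      matrix_vector_mult_distribs scaleR_diff_right flip: matrix_vector_mul_assoc)

definition transition :: "(real \<Rightarrow> real^3^3) \<Rightarrow> real^3 \<Rightarrow> real \<Rightarrow> real \<Rightarrow> real^(5\<times>3)^(5\<times>3)" where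
  "transition R g \<tau> t = exp_nil_part g (\<tau> - t) ** block_diag (transpose (R \<tau>)) ** block_diag (R t)"

locale rigid_body_motion =
  fixes R :: "real \<Rightarrow> real^3^3" and \<omega> :: "real \<Rightarrow> real^3"
  assumes rotation: "\<forall>t\<ge>0. R t \<in> SO3"
    and kinematics: "\<forall>t\<ge>0. (R has_vector_derivative (R t ** skew (\<omega> t))) (at t within {0..})"
begin

lemma orthogonal_matrix_rotation: "0 \<le> t \<Longrightarrow> orthogonal_matrix (R t)"
  using rotation by (simp add: SO3_def)

lemma transition_has_vector_derivative:
  assumes "0 \<le> t" and "t \<le> \<tau>"
  shows "((\<lambda>s. transition R g s t) has_vector_derivative (Amat \<omega> g \<tau> ** transition R g \<tau> t))
           (at \<tau> within {t..})"
proof -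
  let ?N = "nil_part g"
  have "(R has_vector_derivative (R \<tau> ** skew (\<omega> \<tau>))) (at \<tau> within {t..})"
    using assms by (intro has_vector_derivative_within_subset[OF kinematics[rule_format]]) auto
  then have "((\<lambda>s. block_diag (transpose (R s))) has_vector_derivative
      block_diag (transpose (R \<tau> ** skew (\<omega> \<tau>)))) (at \<tau> within {t..})"
    by (intro bounded_linear.has_vector_derivative[OF bounded_linear_block_diag]
        bounded_linear.has_vector_derivative[OF bounded_linear_transpose])
  then have "((\<lambda>s. exp_nil_part g (s - t) ** block_diag (transpose (R s)) ** block_diag (R t))
      has_vector_derivative
      (exp_nil_part g (\<tau> - t) ** block_diag (transpose (R \<tau> ** skew (\<omega> \<tau>)))
        + (?N + (\<tau> - t) *\<^sub>R (?N ** ?N)) ** block_diag (transpose (R \<tau>))) ** block_diag (R t))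
      (at \<tau> within {t..})"
    by (intro bounded_linear.has_vector_derivative
          [OF bounded_bilinear.bounded_linear_left[OF bounded_bilinear_matrix_mult]]
        bounded_bilinear.has_vector_derivative[OF bounded_bilinear_matrix_mult
          exp_nil_part_has_vector_derivative])
  then show ?thesis
    unfolding transition_def Amat_eq transition_derivative_eq .
qed

lemma is_transition_transition: "is_transition (Amat \<omega> g) (transition R g)"
  unfolding is_transition_def
proof (intro allI impI conjI)
  fix t :: real
  assume t: "0 \<le> t"
  have "transpose (R t) ** R t = mat 1"
    using orthogonal_matrix_rotation[OF t] by (simp add: orthogonal_matrix)
  then show "transition R g t t = mat 1"
    by (simp add: transition_def exp_nil_part_0 block_diag_mult block_diag_one)
  show "((\<lambda>s. transition R g s t) has_vector_derivative Amat \<omega> g \<tau> ** transition R g \<tau> t)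
      (at \<tau> within {t..})" if "t \<le> \<tau>" for \<tau>
    using transition_has_vector_derivative t that .
qed

lemma continuous_on_transition:
  assumes "0 \<le> t"
  shows "continuous_on {t..} (\<lambda>s. transition R g s t)"
  unfolding continuous_on_eq_continuous_within
proof
  fix \<tau>
  assume "\<tau> \<in> {t..}"
  then show "continuous (at \<tau> within {t..}) (\<lambda>s. transition R g s t)"
    by (intro has_vector_derivative_continuous[OF transition_has_vector_derivative[OF assms]]) simp
qed

end

section \<open>The output map and its kernel\<close>

definition landmark_term :: "real^3 \<Rightarrow> real^(5\<times>3) \<Rightarrow> real^3" where
  "landmark_term l z = block z 1 - l$1 *\<^sub>R block z 2 - l$2 *\<^sub>R block z 3 - l$3 *\<^sub>R block z 4"

lemma landmark_term_simps [simp]: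
  "landmark_term l (block_diag M *v z) = M *v landmark_term l z"
  "landmark_term l (nil_part g *v z) = block z 5"
  "landmark_term l (z + w) = landmark_term l z + landmark_term l w"
  "landmark_term l (c *\<^sub>R z) = c *\<^sub>R landmark_term l z"
  by (simp_all add: landmark_term_def algebra_simps)

lemma block_Cmat_vector_mult: "block (Cmat P pl \<tau> *v z) i = P i \<tau> *v landmark_term (pl i) z"
proof -
  have "Cmat P pl \<tau> = block_matrix (\<lambda>i b. Cblk (P i \<tau>) (pl i) b)"
    by (simp add: Cmat_def block_matrix_def)
  then show ?thesis
    by (simp add: block_matrix_vector_mult sum_UNIV_5 landmark_term_def Cblk_def algebra_simps)
qed

(* The output map K exp (s N) of the system with omega = 0 and all Pi_i = I. *)

definition free_output :: "real^3 \<Rightarrow> ('n::finite \<Rightarrow> real^3) \<Rightarrow> real \<Rightarrow> real^(5\<times>3)^('n\<times>3)" where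
  "free_output g pl s = Cmat (\<lambda>_ _. mat 1) pl 0 ** exp_nil_part g s"

lemma block_free_output:
  "block (free_output g pl s *v y) i
     = landmark_term (pl i) y + s *\<^sub>R block y 5 + (s^2 / 2) *\<^sub>R gravity_term g y"
  by (simp add: free_output_def block_Cmat_vector_mult exp_nil_part_vector_mult
      flip: matrix_vector_mul_assoc)

lemma continuous_on_free_output: "continuous_on S (free_output g pl)"
  unfolding free_output_def exp_nil_part_def
  by (intro bounded_bilinear.continuous_on[OF bounded_bilinear_matrix_mult] continuous_intros) auto

lemma block_Cmat_transition:
  "block ((Cmat P pl \<tau> ** transition R g \<tau> t) *v x) i
     = P i \<tau> *v (transpose (R \<tau>) *v block (free_output g pl (\<tau> - t) *v (block_diag (R t) *v x)) i)"
  unfolding transition_def exp_nil_part_block_diag_commute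
  by (simp add: block_Cmat_vector_mult block_free_output exp_nil_part_vector_mult
      flip: matrix_vector_mul_assoc)

lemma orthogonal_plane_and_transversal_eq_0:
  fixes a b c g r :: "real^3"
  assumes "\<not> collinear {a, b, c}" and g: "g \<notin> span {b - a, c - a}"
    and "r \<bullet> (b - a) = 0" "r \<bullet> (c - a) = 0" "r \<bullet> g = 0"
  shows "r = 0"
proof (rule ccontr)
  assume "r \<noteq> 0"
  define u v where "u = b - a" and "v = c - a"
  have "\<not> collinear {0, u, v}"
    using assms(1) collinear_3[of b a c] by (simp add: u_def v_def insert_commute)
  then have "u \<noteq> 0" "v \<noteq> 0" and not_multiple: "\<And>k. v \<noteq> k *\<^sub>R u"
    by (auto simp: collinear_lemma)
  have "u \<notin> span {v}"
  proof
    assume "u \<in> span {v}"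
    then obtain k where "u = k *\<^sub>R v" by (auto simp: span_singleton)
    with not_multiple[of "1 / k"] \<open>u \<noteq> 0\<close> show False
      by (cases "k = 0") auto
  qed
  with \<open>v \<noteq> 0\<close> g have "independent {g, u, v}"
    by (auto simp: u_def v_def independent_insert intro: independent_insertI)
  moreover have "{g, u, v} \<subseteq> {x. r \<bullet> x = 0}"
    using assms(3-5) by (auto simp: u_def v_def)
  ultimately have "card {g, u, v} \<le> dim {x. r \<bullet> x = 0}"
    by (intro independent_card_le_dim)
  also have "\<dots> = 2"
    using dim_hyperplane[OF \<open>r \<noteq> 0\<close>] by simp
  finally have "card {g, u, v} \<le> 2" .
  moreover have "g \<noteq> u" "g \<noteq> v"
    using g span_base[of u "{u, v}"] span_base[of v "{u, v}"] by (auto simp: u_def v_def)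
  moreover have "u \<noteq> v"
    using not_multiple[of 1] by auto
  ultimately show False
    by simp
qed

lemma eq_0_if_landmark_terms_vanish:
  fixes a b c g :: "real^3"
  assumes "\<not> collinear {a, b, c}" and "g \<notin> span {b - a, c - a}"
    and "landmark_term a y = 0" "landmark_term b y = 0" "landmark_term c y = 0"
    and "gravity_term g y = 0" and "block y 5 = 0"
  shows "y = 0"
proof -
  have components: "block y 1 $ m = 0 \<and> block y 2 $ m = 0 \<and> block y 3 $ m = 0 \<and> block y 4 $ m = 0"
    for m
  proof -
    define r :: "real^3" where "r = vector [block y 2 $ m, block y 3 $ m, block y 4 $ m]"
    have landmark: "landmark_term l y $ m = block y 1 $ m - r \<bullet> l" for l
      by (simp add: landmark_term_def r_def inner_vec_def sum_3 algebra_simps)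
    have "r \<bullet> g = 0"
      using arg_cong[OF assms(6), of "\<lambda>v. v $ m"]
      by (simp add: gravity_term_def r_def inner_vec_def sum_3 algebra_simps)
    moreover have "r \<bullet> (b - a) = 0" "r \<bullet> (c - a) = 0"
      using assms(3-5) landmark[of a] landmark[of b] landmark[of c] by (simp_all add: inner_diff_right)
    ultimately have "r = 0"
      using orthogonal_plane_and_transversal_eq_0[OF assms(1,2)] by blast
    moreover have "block y 1 $ m = 0"
      using assms(3) landmark[of a] \<open>r = 0\<close> by simp
    ultimately show ?thesis
      by (simp add: r_def vec_eq_iff forall_3)
  qed
  have "block y b = 0" for b
  proof -
    have "b \<in> {1, 2, 3, 4, 5}"
      using UNIV_5 by blast
    then show ?thesis
      using components assms(7) by (auto simp: vec_eq_iff)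
  qed
  then show "y = 0"
    by (intro blocks_eqI) simp
qed

lemma free_output_nonzero:
  fixes pl :: "'n::finite \<Rightarrow> real^3"
  assumes "\<not> collinear {pl i, pl j, pl k}" and "g \<notin> span {pl j - pl i, pl k - pl i}"
    and "y \<noteq> 0"
  shows "\<exists>s\<in>{0..1}. free_output g pl s *v y \<noteq> 0"
proof (rule ccontr)
  assume zero: "\<not> ?thesis"
  have vanish: "landmark_term (pl l) y + s *\<^sub>R block y 5 + (s^2 / 2) *\<^sub>R gravity_term g y = 0"
    if "s \<in> {0, 1/2, 1}" for l s
  proof -
    have "free_output g pl s *v y = 0"
      using zero that by auto
    then show ?thesis
      by (metis block_free_output block_simps(5))
  qed
  have landmark: "landmark_term (pl l) y = 0" for l
    using vanish[of 0 l] by simp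
  have "block y 5 $ m = 0 \<and> gravity_term g y $ m = 0" for m
  proof -
    have "block y 5 $ m + gravity_term g y $ m / 2 = 0"
      "block y 5 $ m / 2 + gravity_term g y $ m / 8 = 0"
      using arg_cong[OF vanish[of 1 i], of "\<lambda>v. v $ m"] arg_cong[OF vanish[of "1/2" i], of "\<lambda>v. v $ m"]
      by (simp_all add: landmark power2_eq_square)
    then show ?thesis by linarith
  qed
  then have "y = 0"
    using eq_0_if_landmark_terms_vanish[OF assms(1,2) landmark landmark landmark]
    by (simp add: vec_eq_iff)
  with \<open>y \<noteq> 0\<close> show False ..
qed

lemma uniform_coercivity_bound:
  fixes P :: "'n::finite \<Rightarrow> real \<Rightarrow> real^3^3"
  assumes "\<forall>i. \<exists>\<epsilon>>0. \<forall>t\<ge>0. \<forall>x. x \<bullet> (P i t *v x) \<ge> \<epsilon> * (x \<bullet> x)"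
  obtains \<epsilon> where "\<epsilon> > 0" and "\<And>i t v. 0 \<le> t \<Longrightarrow> \<epsilon> * norm v \<le> norm (P i t *v v)"
proof -
  obtain e where e: "\<And>i. e i > 0 \<and> (\<forall>t\<ge>0. \<forall>x. e i * (x \<bullet> x) \<le> x \<bullet> (P i t *v x))"
    using assms by metis
  have "Min (range e) * norm v \<le> norm (P i t *v v)" if "0 \<le> t" for i t v
  proof -
    have "Min (range e) * norm v \<le> e i * norm v"
      by (simp add: mult_right_mono)
    also have "\<dots> \<le> norm (P i t *v v)"
      using e that by (intro norm_ge_if_coercive) blast
    finally show ?thesis .
  qed
  moreover have "Min (range e) > 0"
    using e by simp
  ultimately show thesis
    using that by blast
qed

lemma uniformly_observableI:
  fixes C :: "real \<Rightarrow> real^'m::finite^'k::finite"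
  assumes "is_transition A \<Phi>" and "0 < \<delta>" and "0 < \<mu>"
    and cont: "\<And>t. 0 \<le> t \<Longrightarrow> continuous_on {t..t+\<delta>} (\<lambda>\<tau>. C \<tau> ** \<Phi> \<tau> t)"
    and energy: "\<And>t x. 0 \<le> t \<Longrightarrow>
      \<delta> * \<mu> * (x \<bullet> x) \<le> integral {t..t+\<delta>} (\<lambda>\<tau>. norm ((C \<tau> ** \<Phi> \<tau> t) *v x) ^ 2)"
  shows "uniformly_observable A C"
  unfolding uniformly_observable_def
proof (intro exI conjI allI impI)
  fix t :: real and x :: "real^'m"
  assume "0 \<le> t"
  have "\<mu> * (x \<bullet> x) \<le> (1 / \<delta>) * integral {t..t+\<delta>} (\<lambda>\<tau>. norm ((C \<tau> ** \<Phi> \<tau> t) *v x) ^ 2)"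
    using energy[OF \<open>0 \<le> t\<close>, of x] \<open>0 < \<delta>\<close> by (simp add: field_simps)
  then show "\<mu> * (x \<bullet> x) \<le> x \<bullet> (((1 / \<delta>) *\<^sub>R integral {t..t+\<delta>}
      (\<lambda>\<tau>. transpose (C \<tau> ** \<Phi> \<tau> t) ** (C \<tau> ** \<Phi> \<tau> t))) *v x)"
    by (simp add: quadratic_form_integral_gramian[OF cont[OF \<open>0 \<le> t\<close>]])
qed (use assms in auto)

context rigid_body_motion
begin

lemma continuous_on_output_transition:
  assumes "\<And>i. continuous_on {0..} (P i)" and "0 \<le> t"
  shows "continuous_on {t..} (\<lambda>\<tau>. Cmat P pl \<tau> ** transition R g \<tau> t)"
proof -
  have Cblk_eq: "Cblk M l b = (if b = 1 then 1 else if b = 2 then - l$1 else if b = 3 then - l$2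
      else if b = 4 then - l$3 else 0) *\<^sub>R M" for M l b
    by (simp add: Cblk_def)
  have "continuous_on {t..} (Cmat P pl)"
    unfolding Cmat_def Cblk_eq
    by (intro continuous_on_vec_lambda continuous_on_component continuous_on_scaleR
        continuous_on_subset[OF assms(1)] continuous_intros)
      (use assms(2) in auto)
  then show ?thesis
    by (intro bounded_bilinear.continuous_on[OF bounded_bilinear_matrix_mult]
        continuous_on_transition assms(2))
qed

lemma output_norm_ge:
  assumes "0 \<le> \<tau>" and "0 \<le> \<epsilon>" and coercive: "\<And>i v. \<epsilon> * norm v \<le> norm (P i \<tau> *v v)"
  shows "\<epsilon> * norm (free_output g pl (\<tau> - t) *v (block_diag (R t) *v x))
    \<le> norm ((Cmat P pl \<tau> ** transition R g \<tau> t) *v x)"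
proof -
  let ?y = "free_output g pl (\<tau> - t) *v (block_diag (R t) *v x)"
  have orth: "orthogonal_matrix (transpose (R \<tau>))"
    using orthogonal_matrix_rotation[OF \<open>0 \<le> \<tau>\<close>] by simp
  have "(\<epsilon> * norm ?y) ^ 2 = (\<Sum>i\<in>UNIV. (\<epsilon> * norm (transpose (R \<tau>) *v block ?y i)) ^ 2)"
    by (simp add: norm_power2_blocks power_mult_distrib sum_distrib_left
        norm_orthogonal_matrix_vector_mult[OF orth] del: transpose_matrix_vector)
  also have "\<dots> \<le> (\<Sum>i\<in>UNIV. norm (block ((Cmat P pl \<tau> ** transition R g \<tau> t) *v x) i) ^ 2)"
    unfolding block_Cmat_transition
    using coercive \<open>0 \<le> \<epsilon>\<close> by (intro sum_mono power_mono) auto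
  also have "\<dots> = norm ((Cmat P pl \<tau> ** transition R g \<tau> t) *v x) ^ 2"
    by (simp add: norm_power2_blocks)
  finally show ?thesis
    by (rule power2_le_imp_le) simp
qed

lemma output_energy_ge:
  assumes P_cont: "\<And>i. continuous_on {0..} (P i)"
    and "0 \<le> \<epsilon>" and coercive: "\<And>i \<tau> v. 0 \<le> \<tau> \<Longrightarrow> \<epsilon> * norm v \<le> norm (P i \<tau> *v v)"
    and gramian: "\<And>y. m * (y \<bullet> y) \<le> integral {0..1} (\<lambda>s. norm (free_output g pl s *v y) ^ 2)"
    and "0 \<le> t"
  shows "\<epsilon>^2 * m * (x \<bullet> x)
    \<le> integral {t..t+1} (\<lambda>\<tau>. norm ((Cmat P pl \<tau> ** transition R g \<tau> t) *v x) ^ 2)"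
proof -
  let ?y = "block_diag (R t) *v x"
  let ?free = "\<lambda>\<tau>. (\<epsilon> * norm (free_output g pl (\<tau> - t) *v ?y)) ^ 2"
  let ?out = "\<lambda>\<tau>. norm ((Cmat P pl \<tau> ** transition R g \<tau> t) *v x) ^ 2"
  have free_cont: "continuous_on {t..t+1} ?free"
    by (intro continuous_intros continuous_on_compose2[OF continuous_on_free_output]
        bounded_linear.continuous_on[OF bounded_linear_matrix_vector_mult_left]) auto
  have out_cont: "continuous_on {t..t+1} ?out"
    by (intro continuous_intros bounded_linear.continuous_on[OF bounded_linear_matrix_vector_mult_left]
        continuous_on_subset[OF continuous_on_output_transition[OF P_cont \<open>0 \<le> t\<close>]]) auto
  have "x \<bullet> x = ?y \<bullet> ?y"
    using norm_block_diag_orthogonal[OF orthogonal_matrix_rotation[OF \<open>0 \<le> t\<close>], of x]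
    by (simp add: dot_square_norm)
  then have "\<epsilon>^2 * m * (x \<bullet> x) \<le> \<epsilon>^2 * integral {0..1} (\<lambda>s. norm (free_output g pl s *v ?y) ^ 2)"
    using gramian[of ?y] by (simp add: mult_left_mono mult.assoc)
  also have "\<dots> = integral {t..t+1} ?free"
    using integral_shift_Icc_real[of 0 1 "\<lambda>\<tau>. norm (free_output g pl (\<tau> - t) *v ?y) ^ 2" t]
    by (simp add: power_mult_distrib o_def add.commute)
  also have "\<dots> \<le> integral {t..t+1} ?out"
    using \<open>0 \<le> t\<close> coercive \<open>0 \<le> \<epsilon>\<close>
    by (intro integral_le integrable_continuous_interval free_cont out_cont power_mono output_norm_ge) auto
  finally show ?thesis .
qed

end

theorem lemma2:
  fixes R :: "real \<Rightarrow> real^3^3" and \<omega> p :: "real \<Rightarrow> real^3" and g :: "real^3"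
    and pl :: "'n::finite \<Rightarrow> real^3"
    and Rc1 Rc2 :: "real^3^3" and pc1 pc2 :: "real^3"
  assumes "\<forall>t\<ge>0. R t \<in> SO3"
    and "\<forall>t\<ge>0. (R has_vector_derivative (R t ** skew (\<omega> t))) (at t within {0..})"
    and "continuous_on {0..} \<omega>" and "bounded (\<omega> ` {0..})"
    and "g \<noteq> 0"
    and "CARD('n) \<ge> 3"
    and "Rc1 \<in> SO3" and "Rc2 \<in> SO3"
    and "\<forall>i. continuous_on {0..} (PiM R p Rc1 pc1 Rc2 pc2 (pl i))"
    and "\<forall>i. bounded (PiM R p Rc1 pc1 Rc2 pc2 (pl i) ` {0..})"
    and "\<forall>i. \<exists>\<epsilon>>0. \<forall>t\<ge>0. \<forall>x. x \<bullet> (PiM R p Rc1 pc1 Rc2 pc2 (pl i) t *v x) \<ge> \<epsilon> * (x \<bullet> x)"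
    and "\<exists>i j k. \<not> collinear {pl i, pl j, pl k} \<and> g \<notin> span {pl j - pl i, pl k - pl i}"
  shows "uniformly_observable (Amat \<omega> g) (Cmat (\<lambda>i. PiM R p Rc1 pc1 Rc2 pc2 (pl i)) pl)"
proof -
  interpret rigid_body_motion R \<omega>
    using assms(1,2) by unfold_locales
  obtain i j k where plane: "\<not> collinear {pl i, pl j, pl k}"
    and transversal: "g \<notin> span {pl j - pl i, pl k - pl i}"
    using assms(12) by blast
  obtain m where "m > 0"
    and gramian: "\<And>y. m * (y \<bullet> y) \<le> integral {0..1} (\<lambda>s. norm (free_output g pl s *v y) ^ 2)"
    using gramian_coercive[OF zero_less_one continuous_on_free_output free_output_nonzero[OF plane transversal]]
    by blast
  obtain \<epsilon> where "\<epsilon> > 0" and coercive: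
    "\<And>i t v. 0 \<le> t \<Longrightarrow> \<epsilon> * norm v \<le> norm (PiM R p Rc1 pc1 Rc2 pc2 (pl i) t *v v)"
    using uniform_coercivity_bound[OF assms(11)] by blast
  show ?thesis
  proof (rule uniformly_observableI[OF is_transition_transition zero_less_one])
    show "0 < \<epsilon>^2 * m"
      using \<open>\<epsilon> > 0\<close> \<open>m > 0\<close> by simp
  qed (use assms(9) \<open>\<epsilon> > 0\<close> coercive gramian in
      \<open>auto intro: continuous_on_subset[OF continuous_on_output_transition] output_energy_ge\<close>)
qed

end
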